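(* Let $D$ be a non-commutative division ring with center $F$ and let $M$ be a maximal subgroup of $D^*$. If $M$ is abelian, then $M\cup\{0\}$ is a maximal subfield of $D$; that is, $M=K^*$ for some maximal subfield $K$ of $D$.
   Context: $D^*$ is the multiplicative group of $D$; maximal subgroup = proper subgroup maximal among proper subgroups. A maximal subfield of $D$ is a subfield not properly contained in another subfield. *)

theory Defs
  imports Main
begin

definition units_set :: "'a::division_ring set" where
  "units_set = {x. x \<noteq> 0}"

definition mult_subgroup :: "'a::division_ring set \<Rightarrow> bool" where
  "mult_subgroup M \<longleftrightarrow> M \<subseteq> units_set \<and> 1 \<in> M \<and>
     (\<forall>x\<in>M. \<forall>y\<in>M. x * y \<in> M) \<and> (\<forall>x\<in>M. inverse x \<in> M)"

definition maximal_mult_subgroup :: "'a::division_ring set \<Rightarrow> bool" where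
  "maximal_mult_subgroup M \<longleftrightarrow> mult_subgroup M \<and> M \<noteq> units_set \<and>
     (\<forall>H. mult_subgroup H \<and> M \<subseteq> H \<and> H \<noteq> units_set \<longrightarrow> H = M)"

definition subfield :: "'a::division_ring set \<Rightarrow> bool" where
  "subfield K \<longleftrightarrow> 0 \<in> K \<and> 1 \<in> K \<and>
     (\<forall>x\<in>K. \<forall>y\<in>K. x + y \<in> K \<and> x * y \<in> K \<and> x * y = y * x) \<and>
     (\<forall>x\<in>K. - x \<in> K \<and> inverse x \<in> K)"

definition maximal_subfield :: "'a::division_ring set \<Rightarrow> bool" where
  "maximal_subfield K \<longleftrightarrow> subfield K \<and> (\<forall>L. subfield L \<and> K \<subseteq> L \<longrightarrow> L = K)"

end

theory Submission
  imports Defs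
begin

text \<open>The double centralizer \<open>K\<close> of the abelian group \<open>M\<close> is a subfield containing \<open>M\<close>.
  For any subfield \<open>L \<supseteq> M\<close>, the group \<open>L\<^sup>*\<close> contains \<open>M\<close> and is proper because \<open>D\<close> is
  not commutative, so \<open>L\<^sup>* = M\<close> by maximality. Applied to \<open>K\<close> this shows that \<open>M \<union> {0}\<close>
  is a subfield, and applied to an arbitrary \<open>L\<close> that it is maximal.\<close>

definition centralizer :: "'a::division_ring set \<Rightarrow> 'a set" where
  "centralizer S = {x. \<forall>s\<in>S. x * s = s * x}"

lemma commute_inverse:
  fixes x s :: "'a::division_ring"
  assumes "x * s = s * x"
  shows "inverse x * s = s * inverse x"
proof (cases "x = 0")
  case True
  then show ?thesis by simp
next
  case False
  have "inverse x * s = inverse x * (s * x) * inverse x"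
    using False by (simp add: mult.assoc)
  also have "\<dots> = inverse x * (x * s) * inverse x"
    using assms by simp
  also have "\<dots> = s * inverse x"
    using False by (simp flip: mult.assoc)
  finally show ?thesis .
qed

lemma centralizer_closed:
  fixes S :: "'a::division_ring set"
  shows "0 \<in> centralizer S" "1 \<in> centralizer S"
    and "x \<in> centralizer S \<Longrightarrow> y \<in> centralizer S \<Longrightarrow> x + y \<in> centralizer S"
    and "x \<in> centralizer S \<Longrightarrow> y \<in> centralizer S \<Longrightarrow> x * y \<in> centralizer S"
    and "x \<in> centralizer S \<Longrightarrow> - x \<in> centralizer S"
    and "x \<in> centralizer S \<Longrightarrow> inverse x \<in> centralizer S"
  unfolding centralizer_def
  by (auto simp: algebra_simps commute_inverse) (metis mult.assoc)

lemma subset_double_centralizer: "S \<subseteq> centralizer (centralizer S)"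
  unfolding centralizer_def by auto

lemma subfield_double_centralizer:
  fixes S :: "'a::division_ring set"
  assumes commuting: "S \<subseteq> centralizer S"
  shows "subfield (centralizer (centralizer S))"
proof -
  have "centralizer (centralizer S) \<subseteq> centralizer S"
    using commuting unfolding centralizer_def by auto
  then have "x * y = y * x"
    if "x \<in> centralizer (centralizer S)" "y \<in> centralizer (centralizer S)" for x y
    using that unfolding centralizer_def by blast
  then show ?thesis
    unfolding subfield_def by (simp add: centralizer_closed)
qed

lemma mult_subgroup_subfield_nonzero:
  fixes L :: "'a::division_ring set"
  assumes "subfield L"
  shows "mult_subgroup (L - {0})"
  using assms unfolding mult_subgroup_def subfield_def units_set_def
  by (auto simp: nonzero_imp_inverse_nonzero)

lemma subfield_nonzero_neq_units_set:
  fixes L :: "'a::division_ring set"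
  assumes noncomm: "\<exists>a b :: 'a. a * b \<noteq> b * a"
    and "subfield L"
  shows "L - {0} \<noteq> units_set"
proof
  assume "L - {0} = units_set"
  then have "L = UNIV"
    using \<open>subfield L\<close> unfolding units_set_def subfield_def by blast
  then show False
    using noncomm \<open>subfield L\<close> unfolding subfield_def by blast
qed

lemma subfield_above_maximal_mult_subgroup:
  fixes M L :: "'a::division_ring set"
  assumes noncomm: "\<exists>a b :: 'a. a * b \<noteq> b * a"
    and max: "maximal_mult_subgroup M"
    and L: "subfield L" "M \<subseteq> L"
  shows "L = M \<union> {0}"
proof -
  have "0 \<notin> M"
    using max unfolding maximal_mult_subgroup_def mult_subgroup_def units_set_def by blast
  then have "M \<subseteq> L - {0}"
    using L(2) by blast
  then have "L - {0} = M"
    using max mult_subgroup_subfield_nonzero[OF L(1)]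
      subfield_nonzero_neq_units_set[OF noncomm L(1)]
    unfolding maximal_mult_subgroup_def by blast
  moreover have "0 \<in> L"
    using L(1) unfolding subfield_def by blast
  ultimately show ?thesis by blast
qed

theorem proposition2p2:
  fixes M :: "'a::division_ring set"
  assumes noncomm: "\<exists>a b :: 'a. a * b \<noteq> b * a"
    and max: "maximal_mult_subgroup M"
    and abelian: "\<forall>x\<in>M. \<forall>y\<in>M. x * y = y * x"
  shows "maximal_subfield (M \<union> {0})"
proof -
  have "M \<subseteq> centralizer M"
    using abelian unfolding centralizer_def by auto
  then have K: "subfield (centralizer (centralizer M))"
    by (rule subfield_double_centralizer)
  have "centralizer (centralizer M) = M \<union> {0}"
    using subfield_above_maximal_mult_subgroup[OF noncomm max K subset_double_centralizer] .
  with K have "subfield (M \<union> {0})" by simp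
  moreover have "L = M \<union> {0}" if "subfield L" "M \<union> {0} \<subseteq> L" for L
    using subfield_above_maximal_mult_subgroup[OF noncomm max] that by blast
  ultimately show ?thesis
    unfolding maximal_subfield_def by blast
qed

end
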